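(* Let $\mathcal{T}$ be a single-elimination tournament with at least $2$ players and $N$ total brackets, let $R$ be a uniformly random bracket, and let $q_{\mathrm{pair}}=\min_{a,b\in P(\mathcal{T}),\,a\ne b}\Pr[R(x_{a,b})\in\{a,b\}]$. If $\sigma$ is a scoring system with distinct subset sums, then $\mathrm{res}(\mathcal{T},\sigma)=(1-q_{\mathrm{pair}})N+1$.
   Context: A single-elimination tournament is a finite directed graph $\mathcal{T}$ such that: (a) $\mathcal{T}$ has exactly one sink (vertex with no out-neighbours); (b) every non-sink vertex has exactly one out-neighbour; (c) $\mathcal{T}$ has no directed cycles; (d) $|N^-(v)|\ne 1$ for every vertex $v$, where $N^-(v)$ denotes the set of in-neighbours of $v$. The players $P(\mathcal{T})$ are the sources and the matches are $M(\mathcal{T})=V(\mathcal{T})\setminus P(\mathcal{T})$. For a vertex $u$, $P(u)$ is the set of players $a$ for which there is a directed walk from $a$ to $u$ (length $0$ allowed). For distinct players $a,b$, $x_{a,b}$ denotes the unique match $x$ having in-neighbours $u_a,u_b\in N^-(x)$ with $P(u_a)\cap\{a,b\}=\{a\}$ and $P(u_b)\cap\{a,b\}=\{b\}$ (such a match exists and is unique). A bracket is a function $B:V(\mathcal{T})\to P(\mathcal{T})$ with $B(a)=a$ for every player $a$ and $B(x)\in\{B(u):u\in N^-(x)\}$ for every match $x$. A scoring system is any function $\sigma:M(\mathcal{T})\to\mathbb{R}_{>0}$; it has distinct subset sums if for any two sets of matches $M,M'$, $\sum_{x\in M}\sigma(x)=\sum_{x\in M'}\sigma(x)$ implies $M=M'$.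 For brackets $B,B'$ let $\mathrm{score}_\sigma(B,B')=\sum_{x\in M(\mathcal{T}):\,B(x)=B'(x)}\sigma(x)$. A set of brackets $\mathcal{B}$ is $\sigma$-resolving if for every pair of distinct brackets $B\ne B'$ there is $B_i\in\mathcal{B}$ with $\mathrm{score}_\sigma(B_i,B)\ne\mathrm{score}_\sigma(B_i,B')$. $\mathrm{res}(\mathcal{T},\sigma)$ is the minimum $r$ such that every set of $r$ brackets is $\sigma$-resolving. *)

theory Defs
  imports Complex_Main
begin

definition in_nbrs :: "('v \<times> 'v) set \<Rightarrow> 'v \<Rightarrow> 'v set" where
  "in_nbrs E v = {u. (u, v) \<in> E}"

definition is_sink :: "('v \<times> 'v) set \<Rightarrow> 'v \<Rightarrow> bool" where
  "is_sink E v \<longleftrightarrow> (\<forall>w. (v, w) \<notin> E)"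

definition single_elim :: "'v set \<Rightarrow> ('v \<times> 'v) set \<Rightarrow> bool" where
  "single_elim V E \<longleftrightarrow>
     finite V \<and> E \<subseteq> V \<times> V
     \<and> (\<exists>!s. s \<in> V \<and> is_sink E s)
     \<and> (\<forall>v\<in>V. \<not> is_sink E v \<longrightarrow> (\<exists>!w. (v, w) \<in> E))
     \<and> acyclic E
     \<and> (\<forall>v\<in>V. card (in_nbrs E v) \<noteq> 1)"

definition players :: "'v set \<Rightarrow> ('v \<times> 'v) set \<Rightarrow> 'v set" where
  "players V E = {v \<in> V. in_nbrs E v = {}}"

definition matches :: "'v set \<Rightarrow> ('v \<times> 'v) set \<Rightarrow> 'v set" where
  "matches V E = V - players V E"

definition playersTo :: "'v set \<Rightarrow> ('v \<times> 'v) set \<Rightarrow> 'v \<Rightarrow> 'v set" where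
  "playersTo V E u = {a \<in> players V E. (a, u) \<in> E\<^sup>*}"

definition meet :: "'v set \<Rightarrow> ('v \<times> 'v) set \<Rightarrow> 'v \<Rightarrow> 'v \<Rightarrow> 'v" where
  "meet V E a b = (THE x. x \<in> matches V E \<and>
      (\<exists>ua ub. ua \<in> in_nbrs E x \<and> ub \<in> in_nbrs E x \<and>
         playersTo V E ua \<inter> {a, b} = {a} \<and> playersTo V E ub \<inter> {a, b} = {b}))"

text \<open>Brackets: functions V \<rightarrow> players, taken extensional (undefined outside V)
  so that the set of brackets is finite.\<close>
definition brackets :: "'v set \<Rightarrow> ('v \<times> 'v) set \<Rightarrow> ('v \<Rightarrow> 'v) set" where
  "brackets V E = {B. (\<forall>a \<in> players V E. B a = a)
      \<and> (\<forall>x \<in> matches V E. B x \<in> B ` in_nbrs E x)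
      \<and> (\<forall>v. v \<notin> V \<longrightarrow> B v = undefined)}"

definition distinct_subset_sums :: "'v set \<Rightarrow> ('v \<times> 'v) set \<Rightarrow> ('v \<Rightarrow> real) \<Rightarrow> bool" where
  "distinct_subset_sums V E \<sigma> \<longleftrightarrow>
     (\<forall>M M'. M \<subseteq> matches V E \<longrightarrow> M' \<subseteq> matches V E \<longrightarrow>
        sum \<sigma> M = sum \<sigma> M' \<longrightarrow> M = M')"

definition scoring_system :: "'v set \<Rightarrow> ('v \<times> 'v) set \<Rightarrow> ('v \<Rightarrow> real) \<Rightarrow> bool" where
  "scoring_system V E \<sigma> \<longleftrightarrow> (\<forall>x \<in> matches V E. \<sigma> x > 0)"

definition score :: "'v set \<Rightarrow> ('v \<times> 'v) set \<Rightarrow> ('v \<Rightarrow> real) \<Rightarrow> ('v \<Rightarrow> 'v) \<Rightarrow> ('v \<Rightarrow> 'v) \<Rightarrow> real" where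
  "score V E \<sigma> B B' = (\<Sum>x \<in> {x \<in> matches V E. B x = B' x}. \<sigma> x)"

definition resolving :: "'v set \<Rightarrow> ('v \<times> 'v) set \<Rightarrow> ('v \<Rightarrow> real) \<Rightarrow> ('v \<Rightarrow> 'v) set \<Rightarrow> bool" where
  "resolving V E \<sigma> \<B> \<longleftrightarrow>
     (\<forall>B \<in> brackets V E. \<forall>B' \<in> brackets V E. B \<noteq> B' \<longrightarrow>
        (\<exists>Bi \<in> \<B>. score V E \<sigma> Bi B \<noteq> score V E \<sigma> Bi B'))"

definition res :: "'v set \<Rightarrow> ('v \<times> 'v) set \<Rightarrow> ('v \<Rightarrow> real) \<Rightarrow> nat" where
  "res V E \<sigma> = (LEAST r. \<forall>\<B>. \<B> \<subseteq> brackets V E \<longrightarrow> card \<B> = r \<longrightarrow> resolving V E \<sigma> \<B>)"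

definition prob_meet :: "'v set \<Rightarrow> ('v \<times> 'v) set \<Rightarrow> 'v \<Rightarrow> 'v \<Rightarrow> real" where
  "prob_meet V E a b =
     real (card {B \<in> brackets V E. B (meet V E a b) \<in> {a, b}}) / real (card (brackets V E))"

definition q_pair :: "'v set \<Rightarrow> ('v \<times> 'v) set \<Rightarrow> real" where
  "q_pair V E = Min {prob_meet V E a b | a b. a \<in> players V E \<and> b \<in> players V E \<and> a \<noteq> b}"

end

theory Submission
  imports Defs "HOL-Library.FuncSet"
begin

(* Two brackets B \<noteq> B' first differ at some match x (minimal in the tree order), where the
   winners a = B x and b = B' x come from different subtrees, so x = x_{a,b}; any bracket
   predicting a or b at x_{a,b} agrees with exactly one of B, B' at x, and by distinct subset
   sums its scores against them differ. Conversely, for every pair a \<noteq> b the brackets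
   "a beats everybody, b beats everybody else" and "b beats everybody, a beats everybody else"
   differ only at and above x_{a,b}, so every bracket predicting neither a nor b at x_{a,b}
   scores them equally. Hence a set of brackets is resolving as soon as it meets every set
   {B. B(x_{a,b}) \<in> {a,b}}, and it is not resolving if it misses the smallest of them;
   res is one more than the number of brackets outside that smallest set. *)

lemma Least_card_subsets_satisfying:
  fixes U T0 :: "'a set" and F :: "'a set set" and R :: "'a set \<Rightarrow> bool"
  assumes "finite U" "T0 \<subseteq> U"
    and F: "\<And>T. T \<in> F \<Longrightarrow> T \<subseteq> U \<and> card T0 \<le> card T"
    and hitting: "\<And>\<B>. \<B> \<subseteq> U \<Longrightarrow> (\<And>T. T \<in> F \<Longrightarrow> \<B> \<inter> T \<noteq> {}) \<Longrightarrow> R \<B>"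
    and avoiding: "\<And>\<B>. \<B> \<subseteq> U - T0 \<Longrightarrow> \<not> R \<B>"
  shows "(LEAST r. \<forall>\<B>. \<B> \<subseteq> U \<longrightarrow> card \<B> = r \<longrightarrow> R \<B>) = card U - card T0 + 1"
proof (rule Least_equality)
  show "\<forall>\<B>. \<B> \<subseteq> U \<longrightarrow> card \<B> = card U - card T0 + 1 \<longrightarrow> R \<B>"
  proof (intro allI impI)
    fix \<B> assume \<B>: "\<B> \<subseteq> U" "card \<B> = card U - card T0 + 1"
    have "\<B> \<inter> T \<noteq> {}" if "T \<in> F" for T
    proof
      assume "\<B> \<inter> T = {}"
      then have "card \<B> \<le> card (U - T)"
        using \<B>(1) \<open>finite U\<close> by (intro card_mono) auto
      also have "\<dots> = card U - card T"
        using F[OF that] \<open>finite U\<close> by (meson card_Diff_subset finite_subset)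
      finally show False
        using \<B>(2) F[OF that] card_mono[OF \<open>finite U\<close> \<open>T0 \<subseteq> U\<close>] by linarith
    qed
    then show "R \<B>" using hitting \<B>(1) by blast
  qed
next
  fix r assume all_r: "\<forall>\<B>. \<B> \<subseteq> U \<longrightarrow> card \<B> = r \<longrightarrow> R \<B>"
  show "card U - card T0 + 1 \<le> r"
  proof (rule ccontr)
    assume "\<not> card U - card T0 + 1 \<le> r"
    then have "r \<le> card (U - T0)"
      using assms(1,2) by (simp add: card_Diff_subset finite_subset)
    then obtain \<B> where "\<B> \<subseteq> U - T0" "card \<B> = r"
      using obtain_subset_with_card_n by metis
    then show False using all_r avoiding by blast
  qed
qed

definition agreement :: "'v set \<Rightarrow> ('v \<times> 'v) set \<Rightarrow> ('v \<Rightarrow> 'v) \<Rightarrow> ('v \<Rightarrow> 'v) \<Rightarrow> 'v set" where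
  "agreement V E B B' = {x \<in> matches V E. B x = B' x}"

lemma score_eq_iff_agreement_eq:
  assumes "distinct_subset_sums V E \<sigma>"
  shows "score V E \<sigma> Bi B = score V E \<sigma> Bi B' \<longleftrightarrow> agreement V E Bi B = agreement V E Bi B'"
  using assms unfolding score_def agreement_def distinct_subset_sums_def
  by (metis (no_types, lifting) mem_Collect_eq subsetI)

definition favour :: "'a \<Rightarrow> 'a \<Rightarrow> ('a \<Rightarrow> nat) \<Rightarrow> 'a \<Rightarrow> nat" where
  "favour a b g p = (if p = a then 0 else if p = b then 1 else g p + 2)"

lemma inj_on_favour: "a \<noteq> b \<Longrightarrow> inj_on g A \<Longrightarrow> inj_on (favour a b g) A"
  unfolding favour_def inj_on_def by auto

locale single_elim_tournament =
  fixes V :: "'v set" and E :: "('v \<times> 'v) set"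
  assumes single_elim: "single_elim V E"
begin

abbreviation "PL \<equiv> players V E"
abbreviation "MT \<equiv> matches V E"
abbreviation "BR \<equiv> brackets V E"
abbreviation "P \<equiv> playersTo V E"

lemma finite_V: "finite V"
  using single_elim by (simp add: single_elim_def)

lemma edge_in_V: "(u, v) \<in> E \<Longrightarrow> u \<in> V \<and> v \<in> V"
  using single_elim by (auto simp: single_elim_def)

lemma out_edge_unique: "(v, w) \<in> E \<Longrightarrow> (v, w') \<in> E \<Longrightarrow> w = w'"
  using single_elim edge_in_V unfolding single_elim_def is_sink_def by metis

lemma wf_E: "wf E" and wf_converse_E: "wf (E\<inverse>)"
proof -
  have "E \<subseteq> V \<times> V"
    using single_elim by (simp add: single_elim_def)
  then have "finite E"
    using finite_V by (simp add: finite_subset)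
  moreover have "acyclic E"
    using single_elim by (simp add: single_elim_def)
  ultimately show "wf E" "wf (E\<inverse>)"
    by (simp_all add: finite_acyclic_wf finite_acyclic_wf_converse)
qed

lemma no_back_edge: "(u, w) \<in> E\<^sup>* \<Longrightarrow> (w, u) \<in> E \<Longrightarrow> False"
  using single_elim unfolding single_elim_def acyclic_def
  by (meson rtrancl_into_trancl1)

lemma rtrancl_antisym: "(x, y) \<in> E\<^sup>* \<Longrightarrow> (y, x) \<in> E\<^sup>* \<Longrightarrow> x = y"
proof (rule ccontr)
  assume "(x, y) \<in> E\<^sup>*" "(y, x) \<in> E\<^sup>*" "x \<noteq> y"
  then obtain w where "(y, w) \<in> E\<^sup>*" "(w, x) \<in> E" by (metis rtranclE)
  then show False using no_back_edge \<open>(x, y) \<in> E\<^sup>*\<close> by (meson rtrancl_trans)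
qed

lemma in_players_iff: "a \<in> PL \<longleftrightarrow> a \<in> V \<and> (\<forall>u. (u, a) \<notin> E)"
  by (auto simp: players_def in_nbrs_def)

lemma in_matches_iff: "x \<in> MT \<longleftrightarrow> x \<in> V \<and> (\<exists>u. (u, x) \<in> E)"
  by (auto simp: matches_def players_def in_nbrs_def)

lemma reaches_sink: "\<exists>s\<in>V. \<forall>v\<in>V. (v, s) \<in> E\<^sup>*"
proof -
  obtain s where s: "s \<in> V" "is_sink E s" "\<And>t. t \<in> V \<Longrightarrow> is_sink E t \<Longrightarrow> t = s"
    using single_elim by (auto simp: single_elim_def)
  have "v \<in> V \<longrightarrow> (v, s) \<in> E\<^sup>*" for v
  proof (induction v rule: wf_induct_rule[OF wf_converse_E])
    case (1 v)
    show ?case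
    proof
      assume v: "v \<in> V"
      show "(v, s) \<in> E\<^sup>*"
      proof (cases "is_sink E v")
        case True
        then show ?thesis using s v by auto
      next
        case False
        then obtain w where "(v, w) \<in> E" by (auto simp: is_sink_def)
        then show ?thesis using 1 edge_in_V by (meson converse_iff converse_rtrancl_into_rtrancl)
      qed
    qed
  qed
  then show ?thesis using s(1) by blast
qed

lemma playersTo_player: "a \<in> PL \<Longrightarrow> P a = {a}"
  unfolding playersTo_def by (auto elim: rtranclE simp: in_players_iff)

lemma playersTo_mono: "(x, y) \<in> E\<^sup>* \<Longrightarrow> P x \<subseteq> P y"
  by (auto simp: playersTo_def)

lemma playersTo_subset: "P v \<subseteq> PL"
  by (auto simp: playersTo_def)

lemma finite_players: "finite PL"
  using finite_V by (simp add: players_def)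

lemma finite_playersTo: "finite (P v)"
  using finite_V by (rule finite_subset[rotated]) (auto simp: playersTo_def players_def)

lemma playersTo_match: "x \<in> MT \<Longrightarrow> P x = (\<Union>u\<in>{u. (u, x) \<in> E}. P u)"
proof
  assume x: "x \<in> MT"
  show "P x \<subseteq> (\<Union>u\<in>{u. (u, x) \<in> E}. P u)"
  proof
    fix a assume a: "a \<in> P x"
    then have "a \<in> PL" "(a, x) \<in> E\<^sup>*" by (auto simp: playersTo_def)
    moreover have "a \<noteq> x" using calculation x by (auto simp: in_players_iff in_matches_iff)
    ultimately obtain w where "(a, w) \<in> E\<^sup>*" "(w, x) \<in> E" by (metis rtranclE)
    then show "a \<in> (\<Union>u\<in>{u. (u, x) \<in> E}. P u)"
      using \<open>a \<in> PL\<close> by (auto simp: playersTo_def)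
  qed
  show "(\<Union>u\<in>{u. (u, x) \<in> E}. P u) \<subseteq> P x"
    using playersTo_mono by blast
qed

lemma playersTo_nonempty: "v \<in> V \<Longrightarrow> P v \<noteq> {}"
proof (induction v rule: wf_induct_rule[OF wf_E])
  case (1 v)
  show ?case
  proof (cases "v \<in> PL")
    case True
    then show ?thesis using playersTo_player by auto
  next
    case False
    then obtain u where "(u, v) \<in> E" using 1 in_players_iff by blast
    then show ?thesis using 1 edge_in_V playersTo_mono by blast
  qed
qed

lemma rtrancl_comparable:
  "(a, u) \<in> E\<^sup>* \<Longrightarrow> (a, u') \<in> E\<^sup>* \<Longrightarrow> (u, u') \<in> E\<^sup>* \<or> (u', u) \<in> E\<^sup>*"
proof (induction rule: rtrancl_induct)
  case base
  then show ?case by simp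
next
  case (step y z)
  from step.IH[OF step.prems] show ?case
  proof
    assume "(y, u') \<in> E\<^sup>*"
    then show ?thesis
    proof (cases rule: converse_rtranclE)
      case base
      then show ?thesis using step.hyps by auto
    next
      case (step w)
      then have "w = z" using out_edge_unique \<open>(y, z) \<in> E\<close> by blast
      then show ?thesis using step by auto
    qed
  next
    assume "(u', y) \<in> E\<^sup>*"
    then show ?thesis using step.hyps by (meson rtrancl.rtrancl_into_rtrancl)
  qed
qed

lemma in_edges_eq_if_common_player:
  assumes "(u, x) \<in> E" "(u', x) \<in> E" "a \<in> P u" "a \<in> P u'"
  shows "u = u'"
proof -
  have "(u, u') \<in> E\<^sup>* \<or> (u', u) \<in> E\<^sup>*"
    using assms(3,4) rtrancl_comparable by (auto simp: playersTo_def)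
  moreover have False if "(v, v') \<in> E\<^sup>*" "v \<noteq> v'" "(v, x) \<in> E" "(v', x) \<in> E" for v v'
  proof -
    obtain w where "(v, w) \<in> E" "(w, v') \<in> E\<^sup>*"
      using \<open>(v, v') \<in> E\<^sup>*\<close> \<open>v \<noteq> v'\<close> by (metis converse_rtranclE)
    then have "(x, v') \<in> E\<^sup>*" using out_edge_unique \<open>(v, x) \<in> E\<close> by blast
    then show False using no_back_edge \<open>(v', x) \<in> E\<close> by blast
  qed
  ultimately show ?thesis using assms(1,2) by blast
qed

lemma bracket_player: "B \<in> BR \<Longrightarrow> a \<in> PL \<Longrightarrow> B a = a"
  by (auto simp: brackets_def)

lemma bracket_match: "B \<in> BR \<Longrightarrow> x \<in> MT \<Longrightarrow> \<exists>u. (u, x) \<in> E \<and> B x = B u"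
  by (auto simp: brackets_def in_nbrs_def)

lemma bracket_outside: "B \<in> BR \<Longrightarrow> v \<notin> V \<Longrightarrow> B v = undefined"
  by (auto simp: brackets_def)

lemma bracket_in_playersTo: "B \<in> BR \<Longrightarrow> v \<in> V \<Longrightarrow> B v \<in> P v"
proof (induction v rule: wf_induct_rule[OF wf_E])
  case (1 v)
  show ?case
  proof (cases "v \<in> PL")
    case True
    then show ?thesis using playersTo_player bracket_player 1 by auto
  next
    case False
    then have "v \<in> MT" using 1 by (simp add: matches_def)
    then obtain u where "(u, v) \<in> E" "B v = B u" using bracket_match 1 by blast
    then show ?thesis using 1 edge_in_V playersTo_mono by (metis r_into_rtrancl subsetD)
  qed
qed

lemma bracket_winner_below:
  "(x, y) \<in> E\<^sup>* \<Longrightarrow> B \<in> BR \<Longrightarrow> B y = a \<Longrightarrow> a \<in> P x \<Longrightarrow> B x = a"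
proof (induction arbitrary: a rule: rtrancl_induct)
  case base
  then show ?case by simp
next
  case (step y z)
  have "z \<in> MT" using step.hyps(2) edge_in_V in_matches_iff by blast
  then obtain u where u: "(u, z) \<in> E" "B z = B u" using bracket_match step.prems by blast
  have "a \<in> P u" using bracket_in_playersTo u step.prems edge_in_V by auto
  moreover have "a \<in> P y" using playersTo_mono step.hyps(1) step.prems by blast
  ultimately have "u = y" using in_edges_eq_if_common_player u step.hyps(2) by blast
  then show ?case using step u by auto
qed

lemma finite_brackets: "finite BR"
proof (rule finite_subset)
  show "BR \<subseteq> PiE V (\<lambda>_. PL)"
    using bracket_in_playersTo playersTo_subset bracket_outside
    by (fastforce simp: PiE_iff extensional_def)
  show "finite (PiE V (\<lambda>_. PL))"
    using finite_V by (simp add: finite_PiE players_def)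
qed

definition meets_at :: "'v \<Rightarrow> 'v \<Rightarrow> 'v \<Rightarrow> bool" where
  "meets_at a b x \<longleftrightarrow> x \<in> MT \<and>
      (\<exists>ua ub. ua \<in> in_nbrs E x \<and> ub \<in> in_nbrs E x \<and>
         P ua \<inter> {a, b} = {a} \<and> P ub \<inter> {a, b} = {b})"

lemma meets_at_playersTo: "meets_at a b x \<Longrightarrow> a \<in> P x \<and> b \<in> P x"
  unfolding meets_at_def in_nbrs_def using playersTo_mono by blast

lemma meets_at_least:
  assumes "a \<noteq> b" "meets_at a b x" "a \<in> P y" "b \<in> P y"
  shows "(x, y) \<in> E\<^sup>*"
proof -
  have "(a, x) \<in> E\<^sup>*" "(a, y) \<in> E\<^sup>*"
    using assms(3) meets_at_playersTo[OF assms(2)] by (auto simp: playersTo_def)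
  then consider "(x, y) \<in> E\<^sup>*" | "(y, x) \<in> E\<^sup>*" "y \<noteq> x"
    using rtrancl_comparable by blast
  then show ?thesis
  proof cases
    case 2
    then obtain w where w: "(y, w) \<in> E\<^sup>*" "(w, x) \<in> E" by (metis rtranclE)
    then have ab: "a \<in> P w" "b \<in> P w" using assms(3,4) playersTo_mono by blast+
    obtain ua where ua: "(ua, x) \<in> E" "P ua \<inter> {a, b} = {a}"
      using assms(2) by (auto simp: meets_at_def in_nbrs_def)
    then have "ua = w" using in_edges_eq_if_common_player w(2) ab by blast
    then show ?thesis using ua ab assms(1) by auto
  qed
qed

lemma meets_at_exists:
  assumes "a \<in> PL" "b \<in> PL" "a \<noteq> b"
  shows "\<exists>x. meets_at a b x"
proof -
  let ?Y = "{y \<in> V. a \<in> P y \<and> b \<in> P y}"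
  obtain s where "s \<in> V" "\<forall>v\<in>V. (v, s) \<in> E\<^sup>*" using reaches_sink by blast
  moreover have "a \<in> V" "b \<in> V" using assms(1,2) by (simp_all add: players_def)
  ultimately have "s \<in> ?Y" using assms(1,2) by (simp add: playersTo_def)
  then obtain x where x: "x \<in> ?Y" "\<And>y. (y, x) \<in> E \<Longrightarrow> y \<notin> ?Y"
    by (rule wfE_min[OF wf_E]) blast
  have "x \<notin> PL" using x(1) assms(3) playersTo_player by force
  then have "x \<in> MT" using x(1) by (simp add: matches_def)
  then obtain ua ub where u: "(ua, x) \<in> E" "a \<in> P ua" "(ub, x) \<in> E" "b \<in> P ub"
    using playersTo_match x(1) by (metis (no_types, lifting) UN_E mem_Collect_eq)
  then have "ua \<notin> ?Y" "ub \<notin> ?Y" using x(2) by blast+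
  then have "b \<notin> P ua" "a \<notin> P ub" using u edge_in_V by blast+
  then show ?thesis
    using \<open>x \<in> MT\<close> u unfolding meets_at_def in_nbrs_def by blast
qed

lemma meet_eqI: "a \<noteq> b \<Longrightarrow> meets_at a b x \<Longrightarrow> meet V E a b = x"
  unfolding meet_def meets_at_def[symmetric]
  by (rule the_equality) (use rtrancl_antisym meets_at_least meets_at_playersTo in blast)+

lemma meets_at_meet: "a \<in> PL \<Longrightarrow> b \<in> PL \<Longrightarrow> a \<noteq> b \<Longrightarrow> meets_at a b (meet V E a b)"
  using meets_at_exists meet_eqI by metis

lemma meet_least:
  "a \<in> PL \<Longrightarrow> b \<in> PL \<Longrightarrow> a \<noteq> b \<Longrightarrow> a \<in> P y \<Longrightarrow> b \<in> P y \<Longrightarrow> (meet V E a b, y) \<in> E\<^sup>*"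
  using meets_at_least meets_at_meet by blast

definition ranking_bracket :: "('v \<Rightarrow> nat) \<Rightarrow> 'v \<Rightarrow> 'v" where
  "ranking_bracket f v = (if v \<in> V then inv_into PL f (Min (f ` P v)) else undefined)"

lemma ranking_bracket_eqI:
  assumes "inj_on f PL" "v \<in> V" "p \<in> P v" "\<And>q. q \<in> P v \<Longrightarrow> f p \<le> f q"
  shows "ranking_bracket f v = p"
proof -
  have "Min (f ` P v) = f p"
    using assms(3,4) finite_playersTo by (intro Min_eqI) auto
  moreover have "p \<in> PL" using assms(3) playersTo_subset by blast
  ultimately show ?thesis
    using assms(1,2) by (simp add: ranking_bracket_def)
qed

lemma ranking_bracket_min:
  assumes "inj_on f PL" "v \<in> V"
  shows "ranking_bracket f v \<in> P v \<and> (\<forall>q\<in>P v. f (ranking_bracket f v) \<le> f q)"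
proof -
  have "Min (f ` P v) \<in> f ` P v"
    using finite_playersTo playersTo_nonempty[OF assms(2)] by simp
  then obtain p where "p \<in> P v" "f p = Min (f ` P v)" by auto
  moreover have "\<forall>q\<in>P v. f p \<le> f q"
    using calculation finite_playersTo by simp
  ultimately show ?thesis using ranking_bracket_eqI[OF assms] by simp
qed

lemma ranking_bracket_in_brackets:
  assumes "inj_on f PL"
  shows "ranking_bracket f \<in> BR"
  unfolding brackets_def
proof (intro CollectI conjI ballI allI impI)
  fix a assume "a \<in> PL"
  then show "ranking_bracket f a = a"
    using assms playersTo_player by (intro ranking_bracket_eqI) (auto simp: players_def)
next
  fix x assume x: "x \<in> MT"
  then have "x \<in> V" by (simp add: matches_def)
  let ?w = "ranking_bracket f x"
  obtain u where u: "(u, x) \<in> E" "?w \<in> P u"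
    using ranking_bracket_min[OF assms \<open>x \<in> V\<close>] playersTo_match[OF x] by blast
  have "ranking_bracket f u = ?w"
    using ranking_bracket_min[OF assms \<open>x \<in> V\<close>] playersTo_mono[of u x] u edge_in_V
    by (intro ranking_bracket_eqI[OF assms]) auto
  then show "?w \<in> ranking_bracket f ` in_nbrs E x"
    using u(1) unfolding in_nbrs_def by (metis (mono_tags) image_eqI mem_Collect_eq)
next
  fix v assume "v \<notin> V"
  then show "ranking_bracket f v = undefined" by (simp add: ranking_bracket_def)
qed

lemma card_brackets_pos: "card BR > 0"
proof -
  obtain g :: "'v \<Rightarrow> nat" where "inj_on g PL"
    using finite_imp_inj_to_nat_seg[OF finite_players] by blast
  then show ?thesis
    using ranking_bracket_in_brackets finite_brackets card_gt_0_iff by blast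
qed

lemma ranking_bracket_favour:
  assumes "inj_on g PL" "a \<noteq> b" "v \<in> V"
  shows "ranking_bracket (favour a b g) v =
           (if a \<in> P v then a else if b \<in> P v then b else ranking_bracket g v)"
proof -
  note eqI = ranking_bracket_eqI[OF inj_on_favour[OF assms(2,1)] assms(3)]
  consider "a \<in> P v" | "a \<notin> P v" "b \<in> P v" | "a \<notin> P v" "b \<notin> P v" by blast
  then show ?thesis
  proof cases
    case 1
    then show ?thesis by (simp add: eqI favour_def)
  next
    case 2
    then have "ranking_bracket (favour a b g) v = b"
      by (intro eqI) (auto simp: favour_def)
    then show ?thesis using 2 by simp
  next
    case 3
    then have "ranking_bracket (favour a b g) v = ranking_bracket g v"
      using ranking_bracket_min[OF assms(1,3)] by (intro eqI) (auto simp: favour_def)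
    then show ?thesis using 3 by simp
  qed
qed

lemma separating_pair:
  assumes B: "B \<in> BR" "B' \<in> BR" "B \<noteq> B'"
  shows "\<exists>a\<in>PL. \<exists>b\<in>PL. a \<noteq> b \<and>
           (\<forall>Bi. Bi (meet V E a b) \<in> {a, b} \<longrightarrow> agreement V E Bi B \<noteq> agreement V E Bi B')"
proof -
  let ?D = "{x \<in> V. B x \<noteq> B' x}"
  obtain v where "B v \<noteq> B' v" using B(3) by (meson ext)
  then have "v \<in> ?D" using bracket_outside[OF B(1)] bracket_outside[OF B(2)] by fastforce
  then obtain x where x: "x \<in> ?D" "\<And>y. (y, x) \<in> E \<Longrightarrow> y \<notin> ?D"
    by (rule wfE_min[OF wf_E]) blast
  have "x \<in> MT"
    using x(1) bracket_player[OF B(1)] bracket_player[OF B(2)] by (auto simp: matches_def)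
  obtain u where u: "(u, x) \<in> E" "B x = B u" using bracket_match[OF B(1) \<open>x \<in> MT\<close>] by blast
  obtain u' where u': "(u', x) \<in> E" "B' x = B' u'" using bracket_match[OF B(2) \<open>x \<in> MT\<close>] by blast
  define a b where "a = B x" and "b = B' x"
  have "u' \<in> V" using u'(1) edge_in_V by blast
  then have "B' u' = B u'" using x(2)[OF u'(1)] by auto
  have "a \<noteq> b" using x(1) a_def b_def by simp
  have "a \<in> P u" "b \<in> P u'"
    using bracket_in_playersTo[OF B(1)] u u' edge_in_V \<open>B' u' = B u'\<close> a_def b_def by auto
  moreover have "u \<noteq> u'" using \<open>a \<noteq> b\<close> u u' \<open>B' u' = B u'\<close> a_def b_def by auto
  ultimately have "P u \<inter> {a, b} = {a}" "P u' \<inter> {a, b} = {b}"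
    using in_edges_eq_if_common_player[OF u(1) u'(1)] by auto
  then have "meets_at a b x"
    using \<open>x \<in> MT\<close> u(1) u'(1) unfolding meets_at_def in_nbrs_def by blast
  then have "meet V E a b = x" using \<open>a \<noteq> b\<close> meet_eqI by blast
  moreover have "agreement V E Bi B \<noteq> agreement V E Bi B'" if "Bi x \<in> {a, b}" for Bi
  proof -
    have "(x \<in> agreement V E Bi B) \<noteq> (x \<in> agreement V E Bi B')"
      using that \<open>x \<in> MT\<close> \<open>a \<noteq> b\<close> a_def b_def by (auto simp: agreement_def)
    then show ?thesis by metis
  qed
  ultimately show ?thesis
    using \<open>a \<in> P u\<close> \<open>b \<in> P u'\<close> \<open>a \<noteq> b\<close> playersTo_subset by blast
qed

lemma indistinguishable_pair:
  assumes ab: "a \<in> PL" "b \<in> PL" "a \<noteq> b"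
  shows "\<exists>B\<in>BR. \<exists>B'\<in>BR. B \<noteq> B' \<and>
           (\<forall>Bi\<in>BR. Bi (meet V E a b) \<notin> {a, b} \<longrightarrow> agreement V E Bi B = agreement V E Bi B')"
proof -
  obtain g :: "'v \<Rightarrow> nat" where g: "inj_on g PL"
    using finite_imp_inj_to_nat_seg[OF finite_players] by blast
  define B B' where "B = ranking_bracket (favour a b g)" and "B' = ranking_bracket (favour b a g)"
  let ?x = "meet V E a b"
  have "meets_at a b ?x" by (rule meets_at_meet[OF ab])
  then have x: "?x \<in> V" "a \<in> P ?x" "b \<in> P ?x"
    using meets_at_playersTo unfolding meets_at_def matches_def by blast+
  have B_eq: "B v = (if a \<in> P v then a else if b \<in> P v then b else ranking_bracket g v)"
    and B'_eq: "B' v = (if b \<in> P v then b else if a \<in> P v then a else ranking_bracket g v)"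
    if "v \<in> V" for v
    using ranking_bracket_favour[OF g ab(3) that] ranking_bracket_favour[OF g ab(3)[symmetric] that]
    unfolding B_def B'_def by simp_all
  have differ: "B v = a \<and> B' v = b \<and> (?x, v) \<in> E\<^sup>*" if "v \<in> V" "B v \<noteq> B' v" for v
  proof -
    have "a \<in> P v" "b \<in> P v"
      using that B_eq[OF that(1)] B'_eq[OF that(1)] by (auto split: if_splits)
    then show ?thesis using B_eq[OF that(1)] B'_eq[OF that(1)] meet_least[OF ab] by simp
  qed
  have "B \<in> BR" "B' \<in> BR"
    unfolding B_def B'_def using g ab(3) by (simp_all add: ranking_bracket_in_brackets inj_on_favour)
  moreover have "B \<noteq> B'"
    using B_eq[OF x(1)] B'_eq[OF x(1)] x(2,3) ab(3) by force
  moreover have "agreement V E Bi B = agreement V E Bi B'" if "Bi \<in> BR" "Bi ?x \<notin> {a, b}" for Bi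
  proof -
    have "Bi y = B y \<longleftrightarrow> Bi y = B' y" if "y \<in> V" for y
    proof (cases "B y = B' y")
      case False
      then have "B y = a" "B' y = b" "(?x, y) \<in> E\<^sup>*" using differ \<open>y \<in> V\<close> by blast+
      then have "Bi y \<noteq> a" "Bi y \<noteq> b"
        using x(2,3) \<open>Bi \<in> BR\<close> \<open>Bi ?x \<notin> {a, b}\<close> bracket_winner_below by blast+
      then show ?thesis using \<open>B y = a\<close> \<open>B' y = b\<close> by simp
    qed simp
    then show ?thesis unfolding agreement_def matches_def by blast
  qed
  ultimately show ?thesis by blast
qed

definition picking_brackets :: "'v \<Rightarrow> 'v \<Rightarrow> ('v \<Rightarrow> 'v) set" where
  "picking_brackets a b = {B \<in> BR. B (meet V E a b) \<in> {a, b}}"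

lemma resolving_if_meets_all_picking_brackets:
  assumes "distinct_subset_sums V E \<sigma>"
    and "\<And>a b. a \<in> PL \<Longrightarrow> b \<in> PL \<Longrightarrow> a \<noteq> b \<Longrightarrow> \<B> \<inter> picking_brackets a b \<noteq> {}"
  shows "resolving V E \<sigma> \<B>"
  unfolding resolving_def
proof (intro ballI impI)
  fix B B' assume "B \<in> BR" "B' \<in> BR" "B \<noteq> B'"
  then obtain a b where ab: "a \<in> PL" "b \<in> PL" "a \<noteq> b" and separates:
    "\<And>Bi. Bi (meet V E a b) \<in> {a, b} \<Longrightarrow> agreement V E Bi B \<noteq> agreement V E Bi B'"
    using separating_pair by blast
  obtain Bi where "Bi \<in> \<B>" "Bi (meet V E a b) \<in> {a, b}"
    using assms(2)[OF ab] unfolding picking_brackets_def by blast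
  then show "\<exists>Bi\<in>\<B>. score V E \<sigma> Bi B \<noteq> score V E \<sigma> Bi B'"
    using separates score_eq_iff_agreement_eq[OF assms(1)] by blast
qed

lemma not_resolving_if_avoids_picking_brackets:
  assumes "a \<in> PL" "b \<in> PL" "a \<noteq> b" "\<B> \<subseteq> BR - picking_brackets a b"
  shows "\<not> resolving V E \<sigma> \<B>"
proof
  obtain B B' where "B \<in> BR" "B' \<in> BR" "B \<noteq> B'" and same:
    "\<And>Bi. Bi \<in> BR \<Longrightarrow> Bi (meet V E a b) \<notin> {a, b} \<Longrightarrow> agreement V E Bi B = agreement V E Bi B'"
    using indistinguishable_pair[OF assms(1-3)] by blast
  assume "resolving V E \<sigma> \<B>"
  then obtain Bi where "Bi \<in> \<B>" "score V E \<sigma> Bi B \<noteq> score V E \<sigma> Bi B'"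
    using \<open>B \<in> BR\<close> \<open>B' \<in> BR\<close> \<open>B \<noteq> B'\<close> unfolding resolving_def by blast
  moreover have "agreement V E Bi B = agreement V E Bi B'"
    using \<open>Bi \<in> \<B>\<close> assms(4) same unfolding picking_brackets_def by blast
  ultimately show False by (simp add: score_def agreement_def)
qed

lemma q_pair_attained:
  assumes "card PL \<ge> 2"
  obtains a0 b0 where "a0 \<in> PL" "b0 \<in> PL" "a0 \<noteq> b0"
    "q_pair V E = card (picking_brackets a0 b0) / card BR"
    "\<And>a b. a \<in> PL \<Longrightarrow> b \<in> PL \<Longrightarrow> a \<noteq> b \<Longrightarrow>
       card (picking_brackets a0 b0) \<le> card (picking_brackets a b)"
proof -
  have prob: "prob_meet V E a b = card (picking_brackets a b) / card BR" for a b
    by (simp add: prob_meet_def picking_brackets_def)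
  define Q where "Q = {prob_meet V E a b | a b. a \<in> PL \<and> b \<in> PL \<and> a \<noteq> b}"
  have "Q \<subseteq> (\<lambda>(a, b). prob_meet V E a b) ` (PL \<times> PL)"
    unfolding Q_def by force
  then have "finite Q" using finite_players by (auto intro: finite_subset)
  obtain a where "a \<in> PL" using assms by fastforce
  moreover have "card (PL - {a}) \<ge> 1"
    using assms calculation finite_players by (simp add: card_Diff_singleton)
  then have "PL - {a} \<noteq> {}" by (metis card.empty not_one_le_zero)
  then obtain b where "b \<in> PL" "b \<noteq> a" by blast
  ultimately have "Q \<noteq> {}" unfolding Q_def by blast
  then have "Min Q \<in> Q" using \<open>finite Q\<close> by simp
  then obtain a0 b0 where ab0: "a0 \<in> PL" "b0 \<in> PL" "a0 \<noteq> b0" "Min Q = prob_meet V E a0 b0"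
    unfolding Q_def by blast
  have "card (picking_brackets a0 b0) \<le> card (picking_brackets a b)"
    if "a \<in> PL" "b \<in> PL" "a \<noteq> b" for a b
  proof -
    have "Min Q \<le> prob_meet V E a b"
      using that \<open>finite Q\<close> unfolding Q_def by (intro Min_le) blast+
    then show ?thesis using ab0(4) card_brackets_pos by (simp add: prob divide_le_cancel)
  qed
  moreover have "q_pair V E = card (picking_brackets a0 b0) / card BR"
    using ab0(4) prob unfolding q_pair_def Q_def by simp
  ultimately show ?thesis using that ab0(1-3) by blast
qed

lemma res_eq_card_outside_picking_brackets:
  assumes "distinct_subset_sums V E \<sigma>" and ab0: "a0 \<in> PL" "b0 \<in> PL" "a0 \<noteq> b0"
    and minimal: "\<And>a b. a \<in> PL \<Longrightarrow> b \<in> PL \<Longrightarrow> a \<noteq> b \<Longrightarrow>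
                    card (picking_brackets a0 b0) \<le> card (picking_brackets a b)"
  shows "res V E \<sigma> = card BR - card (picking_brackets a0 b0) + 1"
  unfolding res_def
proof (rule Least_card_subsets_satisfying
    [where F = "{picking_brackets a b | a b. a \<in> PL \<and> b \<in> PL \<and> a \<noteq> b}"])
  show "finite BR" by (rule finite_brackets)
  show "picking_brackets a0 b0 \<subseteq> BR" by (auto simp: picking_brackets_def)
  show "T \<subseteq> BR \<and> card (picking_brackets a0 b0) \<le> card T"
    if "T \<in> {picking_brackets a b | a b. a \<in> PL \<and> b \<in> PL \<and> a \<noteq> b}" for T
    using that minimal by (auto simp: picking_brackets_def)
  show "resolving V E \<sigma> \<B>"
    if "\<And>T. T \<in> {picking_brackets a b | a b. a \<in> PL \<and> b \<in> PL \<and> a \<noteq> b} \<Longrightarrow> \<B> \<inter> T \<noteq> {}"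
    for \<B>
    using that by (intro resolving_if_meets_all_picking_brackets[OF assms(1)]) blast
  show "\<not> resolving V E \<sigma> \<B>" if "\<B> \<subseteq> BR - picking_brackets a0 b0" for \<B>
    using not_resolving_if_avoids_picking_brackets[OF ab0 that] .
qed

end

theorem lemmaA2:
  fixes V :: "'v set" and E :: "('v \<times> 'v) set" and \<sigma> :: "'v \<Rightarrow> real"
  assumes "single_elim V E"
    and "card (players V E) \<ge> 2"
    and "scoring_system V E \<sigma>"
    and "distinct_subset_sums V E \<sigma>"
  shows "real (res V E \<sigma>) = (1 - q_pair V E) * real (card (brackets V E)) + 1"
proof -
  interpret single_elim_tournament V E by (rule single_elim_tournament.intro) fact
  obtain a0 b0 where ab0: "a0 \<in> PL" "b0 \<in> PL" "a0 \<noteq> b0"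
    and q_pair: "q_pair V E = card (picking_brackets a0 b0) / card BR"
    and minimal: "\<And>a b. a \<in> PL \<Longrightarrow> b \<in> PL \<Longrightarrow> a \<noteq> b \<Longrightarrow>
                    card (picking_brackets a0 b0) \<le> card (picking_brackets a b)"
    using q_pair_attained assms(2) by blast
  have "res V E \<sigma> = card BR - card (picking_brackets a0 b0) + 1"
    using res_eq_card_outside_picking_brackets[OF assms(4) ab0 minimal] .
  moreover have "card (picking_brackets a0 b0) \<le> card BR"
    using finite_brackets by (rule card_mono) (auto simp: picking_brackets_def)
  ultimately show ?thesis
    using q_pair card_brackets_pos by (simp add: of_nat_diff field_simps)
qed

end
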